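(* Let $f:\mathbb{N}\to(0,\infty)$ be a function such that both $f$ and $1/f$ (the function $n\mapsto f(n)^{-1}$) are weakly super-multiplicative. Suppose $f$ has a normal order $g:(0,\infty)\to(0,\infty)$ which is monotonic or $\log$-uniformly continuous. Then there exists a constant $c\in\mathbb{R}$ such that $f(n)=n^c$ for all $n\in\mathbb{N}$.
   Context: A function $f:\mathbb{N}\to[0,\infty)$ is weakly super-multiplicative if for all $n\in\mathbb{N}$ and all $\epsilon>0$ there exist $x_0>0$ and $\delta>0$ such that for all real $x>x_0$, $\#\{m\in\mathbb{N}\cap[x,(1+\epsilon)x]: f(nm)\ge(1-\epsilon)f(n)f(m)\}\ge\delta x$. A function $f:\mathbb{N}\to[0,\infty)$ has normal order $g$ if for every $\epsilon>0$ the set $\{n\in\mathbb{N}: |f(n)-g(n)|\ge\epsilon g(n)\}$ has upper (natural) density $0$. A function $g:(0,\infty)\to(0,\infty)$ is $\log$-uniformly continuous if for every $\epsilon>0$ there is $\delta>0$ such that for all $x,y>0$ with $|x/y-1|<\delta$ we have $|g(x)/g(y)-1|<\epsilon$. *)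

theory Defs
  imports "HOL-Analysis.Analysis" "HOL-Library.Liminf_Limsup"
begin

text \<open>Natural numbers are the positive integers {1,2,...}; values of functions at 0 are irrelevant.\<close>

definition weakly_supermult :: "(nat \<Rightarrow> real) \<Rightarrow> bool" where
  "weakly_supermult f \<longleftrightarrow>
     (\<forall>n::nat. n \<ge> 1 \<longrightarrow> (\<forall>\<epsilon>::real. \<epsilon> > 0 \<longrightarrow>
        (\<exists>x0::real. \<exists>\<delta>::real. x0 > 0 \<and> \<delta> > 0 \<and>
           (\<forall>x::real. x > x0 \<longrightarrow>
              real (card {m::nat. m \<ge> 1 \<and> x \<le> real m \<and> real m \<le> (1 + \<epsilon>) * x \<and>
                                  f (n * m) \<ge> (1 - \<epsilon>) * f n * f m}) \<ge> \<delta> * x))))"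

definition upper_density :: "nat set \<Rightarrow> ereal" where
  "upper_density S = limsup (\<lambda>N. ereal (real (card (S \<inter> {1..N})) / real N))"

definition has_normal_order :: "(nat \<Rightarrow> real) \<Rightarrow> (real \<Rightarrow> real) \<Rightarrow> bool" where
  "has_normal_order f g \<longleftrightarrow>
     (\<forall>\<epsilon>::real. \<epsilon> > 0 \<longrightarrow>
        upper_density {n::nat. n \<ge> 1 \<and> \<bar>f n - g (real n)\<bar> \<ge> \<epsilon> * g (real n)} = 0)"

definition log_unif_cont :: "(real \<Rightarrow> real) \<Rightarrow> bool" where
  "log_unif_cont g \<longleftrightarrow>
     (\<forall>\<epsilon>::real. \<epsilon> > 0 \<longrightarrow> (\<exists>\<delta>::real. \<delta> > 0 \<and>
        (\<forall>x y::real. x > 0 \<longrightarrow> y > 0 \<longrightarrow> \<bar>x / y - 1\<bar> < \<delta> \<longrightarrow> \<bar>g x / g y - 1\<bar> < \<epsilon>)))"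

end

theory Submission
  imports Defs
begin

text \<open>
  Weak super-multiplicativity gives, for each \<open>n\<close> and every window \<open>[x, (1 + \<epsilon>) x]\<close>,
  a positive proportion of \<open>m\<close> with \<open>f (n m) \<ge> (1 - \<epsilon>) f n f m\<close>. The exceptional set of
  the normal order has density zero, so some such \<open>m\<close> has both \<open>m\<close> and \<open>n m\<close> outside it,
  and the inequality passes to \<open>g\<close>: up to factors close to 1, \<open>g (n m) \<ge> f n g m\<close>.
  The same argument for \<open>1 / f\<close> gives the reverse bound. If \<open>g\<close> cannot drop sharply over
  short multiplicative steps (true for increasing and for log-uniformly continuous \<open>g\<close>),
  these become \<open>g (s y) \<ge> a g y\<close> and \<open>g (r y) \<le> b g y\<close> for all large \<open>y\<close>, with
  \<open>s \<approx> n\<close>, \<open>a \<approx> f n\<close>, \<open>r \<approx> k\<close>, \<open>b \<approx> f k\<close>. Iterating along \<open>s ^ K \<approx> r ^ J\<close> gives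
  \<open>ln (f n) / ln n \<le> ln (f k) / ln k\<close>, so this ratio is constant. A decreasing \<open>g\<close> is
  handled by passing to \<open>1 / f\<close>, which has the increasing normal order \<open>1 / g\<close>.
\<close>

lemma upper_density_nonneg: "upper_density S \<ge> 0"
  unfolding upper_density_def by (intro le_Limsup) auto

lemma upper_density_mono: "S \<subseteq> T \<Longrightarrow> upper_density S \<le> upper_density T"
  unfolding upper_density_def
  by (intro Limsup_mono always_eventually allI ereal_less_eq(3)[THEN iffD2]
        divide_right_mono of_nat_mono card_mono) auto

lemma eventually_card_less_of_upper_density_zero:
  assumes "upper_density S = 0" "\<eta> > 0"
  shows "eventually (\<lambda>N. real (card (S \<inter> {1..N})) < \<eta> * real N) sequentially"
proof -
  have "limsup (\<lambda>N. ereal (real (card (S \<inter> {1..N})) / real N)) < ereal \<eta>"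
    using assms unfolding upper_density_def by simp
  then have "eventually (\<lambda>N. real (card (S \<inter> {1..N})) / real N < \<eta>) sequentially"
    by (auto dest: Limsup_lessD)
  with eventually_ge_at_top[of "1::nat"] show ?thesis
    by eventually_elim (simp add: divide_less_eq mult.commute)
qed

lemma has_normal_order_inverse:
  assumes normal: "has_normal_order f g"
    and fpos: "\<forall>n::nat. n \<ge> 1 \<longrightarrow> f n > 0" and gpos: "\<forall>x::real. x > 0 \<longrightarrow> g x > 0"
  shows "has_normal_order (\<lambda>n. 1 / f n) (\<lambda>x. 1 / g x)"
  unfolding has_normal_order_def
proof (intro allI impI)
  fix \<epsilon> :: real assume "\<epsilon> > 0"
  define \<theta> where "\<theta> = \<epsilon> / (1 + \<epsilon>)"
  have \<theta>: "\<theta> > 0" "\<theta> * (1 + \<epsilon>) = \<epsilon>" "(1 - \<theta>) * (1 + \<epsilon>) = 1"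
    using \<open>\<epsilon> > 0\<close> by (auto simp: \<theta>_def field_simps)
  let ?bad = "\<lambda>f g \<epsilon>. {n::nat. n \<ge> 1 \<and> \<bar>f n - g (real n)\<bar> \<ge> \<epsilon> * g (real n)}"
  have "?bad (\<lambda>n. 1 / f n) (\<lambda>x. 1 / g x) \<epsilon> \<subseteq> ?bad f g \<theta>"
  proof (intro subsetI CollectI conjI)
    fix n assume "n \<in> ?bad (\<lambda>n. 1 / f n) (\<lambda>x. 1 / g x) \<epsilon>"
    then have n: "n \<ge> 1" and "\<bar>1 / f n - 1 / g n\<bar> \<ge> \<epsilon> / g n" by auto
    moreover have "f n > 0" "g n > 0" using n fpos gpos by auto
    ultimately have "\<epsilon> / g n \<le> \<bar>g n - f n\<bar> / (f n * g n)"
      by (simp add: diff_frac_eq)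
    then have far: "\<epsilon> * f n \<le> \<bar>f n - g n\<bar>"
      using \<open>f n > 0\<close> \<open>g n > 0\<close> by (simp add: le_divide_eq abs_minus_commute)
    show "n \<ge> 1" by (fact n)
    show "\<bar>f n - g n\<bar> \<ge> \<theta> * g n"
    proof (rule ccontr)
      assume "\<not> \<bar>f n - g n\<bar> \<ge> \<theta> * g n"
      then have close: "\<bar>f n - g n\<bar> < \<theta> * g n" and "(1 - \<theta>) * g n < f n"
        by (auto simp: algebra_simps)
      have "g n = (1 + \<epsilon>) * ((1 - \<theta>) * g n)" using \<theta>(3) by (simp add: mult.assoc [symmetric] mult.commute)
      also have "\<dots> < (1 + \<epsilon>) * f n"
        using \<open>(1 - \<theta>) * g n < f n\<close> \<open>\<epsilon> > 0\<close> by (intro mult_strict_left_mono) auto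
      finally have "\<bar>f n - g n\<bar> < \<theta> * ((1 + \<epsilon>) * f n)"
        using close \<theta>(1) by (smt (verit) mult_strict_left_mono)
      also have "\<dots> = \<epsilon> * f n" by (simp only: mult.assoc [symmetric] \<theta>(2))
      finally show False using far by simp
    qed
  qed
  then have "upper_density (?bad (\<lambda>n. 1 / f n) (\<lambda>x. 1 / g x) \<epsilon>) \<le> upper_density (?bad f g \<theta>)"
    by (rule upper_density_mono)
  also have "\<dots> = 0" using normal \<theta>(1) unfolding has_normal_order_def by blast
  finally show "upper_density (?bad (\<lambda>n. 1 / f n) (\<lambda>x. 1 / g x) \<epsilon>) = 0"
    using upper_density_nonneg order.antisym by blast
qed

lemma weakly_supermult_at_one:
  assumes wsm: "weakly_supermult h" and hpos: "\<forall>n::nat. n \<ge> 1 \<longrightarrow> h n > 0"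
  shows "h 1 \<le> 1"
proof (rule ccontr)
  assume "\<not> h 1 \<le> 1"
  define \<theta> where "\<theta> = (h 1 - 1) / (2 * h 1)"
  have "\<theta> > 0" and one_lt: "1 < (1 - \<theta>) * h 1"
    using \<open>\<not> h 1 \<le> 1\<close> by (auto simp: \<theta>_def field_simps)
  obtain x0 \<delta> where "\<delta> > 0" and count: "\<And>x. x > x0 \<Longrightarrow>
    real (card {m::nat. m \<ge> 1 \<and> x \<le> real m \<and> real m \<le> (1 + \<theta>) * x \<and>
                        h (1 * m) \<ge> (1 - \<theta>) * h 1 * h m}) \<ge> \<delta> * x"
    and "x0 > 0"
    using wsm \<open>\<theta> > 0\<close> unfolding weakly_supermult_def by blast
  define S where "S = {m::nat. m \<ge> 1 \<and> x0 + 1 \<le> real m \<and> real m \<le> (1 + \<theta>) * (x0 + 1) \<and>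
                               h (1 * m) \<ge> (1 - \<theta>) * h 1 * h m}"
  have "0 < \<delta> * (x0 + 1)" using \<open>\<delta> > 0\<close> \<open>x0 > 0\<close> by simp
  also have "\<dots> \<le> real (card S)" unfolding S_def by (rule count) simp
  finally have "S \<noteq> {}" by auto
  then obtain m :: nat where "m \<ge> 1" "(1 - \<theta>) * h 1 * h m \<le> h m" unfolding S_def by auto
  moreover have "h m > 0" using hpos \<open>m \<ge> 1\<close> by blast
  ultimately show False using one_lt by (simp add: mult_le_cancel_right1)
qed

lemma eventually_card_multiples_in_null_set:
  assumes null: "upper_density E = 0" and "n \<ge> 1" "\<eta> > 0"
  shows "eventually (\<lambda>N. real (card {m \<in> {1..N}. m \<in> E \<or> n * m \<in> E}) < \<eta> * real N) sequentially"
proof -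
  define \<eta>' where "\<eta>' = \<eta> / real (Suc n)"
  have "\<eta>' > 0" using \<open>\<eta> > 0\<close> by (simp add: \<eta>'_def)
  from eventually_card_less_of_upper_density_zero[OF null this]
  obtain N0 where N0: "\<And>N. N \<ge> N0 \<Longrightarrow> real (card (E \<inter> {1..N})) < \<eta>' * real N"
    unfolding eventually_sequentially by blast
  show ?thesis unfolding eventually_sequentially
  proof (intro exI allI impI)
    fix N assume "N \<ge> N0"
    have "inj_on (\<lambda>m. n * m) {m \<in> {1..N}. n * m \<in> E}" using \<open>n \<ge> 1\<close> by (auto simp: inj_on_def)
    moreover have "(\<lambda>m. n * m) ` {m \<in> {1..N}. n * m \<in> E} \<subseteq> E \<inter> {1..n * N}" using \<open>n \<ge> 1\<close> by auto
    ultimately have multiples: "card {m \<in> {1..N}. n * m \<in> E} \<le> card (E \<inter> {1..n * N})"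
      by (metis card_image card_mono finite_Int finite_atLeastAtMost)
    have "card {m \<in> {1..N}. m \<in> E \<or> n * m \<in> E} \<le> card ((E \<inter> {1..N}) \<union> {m \<in> {1..N}. n * m \<in> E})"
      by (intro card_mono) auto
    also have "\<dots> \<le> card (E \<inter> {1..N}) + card (E \<inter> {1..n * N})"
      using card_Un_le [of "E \<inter> {1..N}" "{m \<in> {1..N}. n * m \<in> E}"] multiples by linarith
    finally have "real (card {m \<in> {1..N}. m \<in> E \<or> n * m \<in> E})
        \<le> real (card (E \<inter> {1..N})) + real (card (E \<inter> {1..n * N}))" by linarith
    also have "\<dots> < \<eta>' * real N + \<eta>' * real (n * N)"
      using \<open>n \<ge> 1\<close> \<open>N \<ge> N0\<close>
      by (intro add_strict_mono N0) (simp_all add: order.trans [OF _ mult_le_mono1, of _ 1])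
    also have "\<dots> = \<eta>' * real (Suc n) * real N" by (simp add: algebra_simps)
    also have "\<dots> = \<eta> * real N" by (simp add: \<eta>'_def)
    finally show "real (card {m \<in> {1..N}. m \<in> E \<or> n * m \<in> E}) < \<eta> * real N" .
  qed
qed

lemma weakly_supermult_avoiding_null_set:
  assumes wsm: "weakly_supermult h" and "n \<ge> 1" "\<theta> > 0" and null: "upper_density E = 0"
  shows "\<exists>X. \<forall>x\<ge>X. \<exists>m::nat. m \<ge> 1 \<and> x \<le> real m \<and> real m \<le> (1 + \<theta>) * x \<and>
           (1 - \<theta>) * h n * h m \<le> h (n * m) \<and> m \<notin> E \<and> n * m \<notin> E"
proof -
  obtain x0 \<delta> where "\<delta> > 0" and count: "\<And>x. x > x0 \<Longrightarrow>
    real (card {m::nat. m \<ge> 1 \<and> x \<le> real m \<and> real m \<le> (1 + \<theta>) * x \<and>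
                        h (n * m) \<ge> (1 - \<theta>) * h n * h m}) \<ge> \<delta> * x"
    using wsm \<open>n \<ge> 1\<close> \<open>\<theta> > 0\<close> unfolding weakly_supermult_def by blast
  have "\<delta> / (1 + \<theta>) > 0" using \<open>\<delta> > 0\<close> \<open>\<theta> > 0\<close> by simp
  from eventually_card_multiples_in_null_set[OF null \<open>n \<ge> 1\<close> this]
  obtain N0 where N0: "\<And>N. N \<ge> N0 \<Longrightarrow>
      real (card {m \<in> {1..N}. m \<in> E \<or> n * m \<in> E}) < \<delta> / (1 + \<theta>) * real N"
    unfolding eventually_sequentially by blast
  show ?thesis
  proof (intro exI [of _ "max (x0 + 1) (real N0)"] allI impI)
    fix x assume x: "max (x0 + 1) (real N0) \<le> x"
    define N where "N = nat \<lfloor>(1 + \<theta>) * x\<rfloor>"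
    define S where "S = {m::nat. m \<ge> 1 \<and> x \<le> real m \<and> real m \<le> (1 + \<theta>) * x \<and>
                               h (n * m) \<ge> (1 - \<theta>) * h n * h m}"
    have "0 \<le> x" using x of_nat_0_le_iff [of N0] by linarith
    then have "x \<le> (1 + \<theta>) * x" using \<open>\<theta> > 0\<close> by (simp add: distrib_right)
    then have "N \<ge> N0" using x by (simp add: N_def le_nat_floor)
    have "real N \<le> (1 + \<theta>) * x" using x \<open>\<theta> > 0\<close> by (simp add: N_def)
    have "S \<subseteq> {1..N}" by (auto simp: S_def N_def le_nat_floor)
    have "real (card {m \<in> {1..N}. m \<in> E \<or> n * m \<in> E}) < \<delta> / (1 + \<theta>) * real N"
      using \<open>N \<ge> N0\<close> by (rule N0)
    also have "\<dots> \<le> \<delta> / (1 + \<theta>) * ((1 + \<theta>) * x)"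
      using \<open>real N \<le> (1 + \<theta>) * x\<close> \<open>\<delta> / (1 + \<theta>) > 0\<close> by (intro mult_left_mono) auto
    also have "\<dots> = \<delta> * x" using \<open>\<theta> > 0\<close> by simp
    also have "\<dots> \<le> real (card S)" unfolding S_def using x by (intro count) simp
    finally have "\<not> S \<subseteq> {m \<in> {1..N}. m \<in> E \<or> n * m \<in> E}"
      by (auto dest: card_mono [rotated])
    then show "\<exists>m::nat. m \<ge> 1 \<and> x \<le> real m \<and> real m \<le> (1 + \<theta>) * x \<and>
           (1 - \<theta>) * h n * h m \<le> h (n * m) \<and> m \<notin> E \<and> n * m \<notin> E"
      using \<open>S \<subseteq> {1..N}\<close> unfolding S_def by blast
  qed
qed

lemma normal_order_supermult:
  assumes hpos: "\<forall>n::nat. n \<ge> 1 \<longrightarrow> h n > 0" and Gpos: "\<forall>x::real. x > 0 \<longrightarrow> G x > 0"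
    and normal: "has_normal_order h G" and wsm: "weakly_supermult h"
    and "n \<ge> 1" "0 < \<epsilon>" "\<epsilon> < 1"
  shows "\<exists>X. \<forall>x\<ge>X. \<exists>m::nat. x \<le> real m \<and> real m \<le> (1 + \<epsilon>) * x \<and>
           (1 - \<epsilon>) * h n * G (real m) \<le> G (real n * real m)"
proof -
  define \<theta> where "\<theta> = \<epsilon> / 3"
  have "\<theta> > 0" "\<theta> \<le> \<epsilon>" "\<theta> < 1" using \<open>0 < \<epsilon>\<close> \<open>\<epsilon> < 1\<close> by (auto simp: \<theta>_def)
  define E where "E = {k::nat. k \<ge> 1 \<and> \<bar>h k - G (real k)\<bar> \<ge> \<theta> * G (real k)}"
  have "upper_density E = 0" using normal \<open>\<theta> > 0\<close> unfolding has_normal_order_def E_def by blast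
  from weakly_supermult_avoiding_null_set[OF wsm \<open>n \<ge> 1\<close> \<open>\<theta> > 0\<close> this]
  obtain X where X: "\<And>x. x \<ge> X \<Longrightarrow> \<exists>m::nat. m \<ge> 1 \<and> x \<le> real m \<and> real m \<le> (1 + \<theta>) * x \<and>
           (1 - \<theta>) * h n * h m \<le> h (n * m) \<and> m \<notin> E \<and> n * m \<notin> E" by blast
  show ?thesis
  proof (intro exI [of _ "max X 0"] allI impI)
    fix x assume x: "max X 0 \<le> x"
    then obtain m :: nat where "m \<ge> 1" "x \<le> real m" "real m \<le> (1 + \<theta>) * x"
      and super: "(1 - \<theta>) * h n * h m \<le> h (n * m)" and "m \<notin> E" "n * m \<notin> E"
      using X by fastforce
    have "n * m \<ge> 1" using \<open>n \<ge> 1\<close> \<open>m \<ge> 1\<close> by simp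
    have pos: "h n > 0" "G (real m) > 0" using hpos Gpos \<open>n \<ge> 1\<close> \<open>m \<ge> 1\<close> by auto
    have "(1 - \<theta>) * G (real m) < h m"
      using \<open>m \<ge> 1\<close> \<open>m \<notin> E\<close> by (auto simp: E_def algebra_simps abs_less_iff)
    moreover have "h (n * m) < (1 + \<theta>) * G (real n * real m)"
      using \<open>n * m \<ge> 1\<close> \<open>n * m \<notin> E\<close> by (auto simp: E_def algebra_simps abs_less_iff)
    ultimately have "(1 - \<theta>) * h n * ((1 - \<theta>) * G (real m)) < (1 + \<theta>) * G (real n * real m)"
      using super pos \<open>\<theta> < 1\<close> by (smt (verit) mult_strict_left_mono mult_pos_pos)
    moreover have "(1 + \<theta>) * (1 - \<epsilon>) \<le> (1 - \<theta>) * (1 - \<theta>)"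
      using \<open>0 < \<epsilon>\<close> by (simp add: \<theta>_def algebra_simps power2_eq_square)
    ultimately have "(1 + \<theta>) * ((1 - \<epsilon>) * h n * G (real m)) < (1 + \<theta>) * G (real n * real m)"
      using pos by (smt (verit) mult.commute mult.left_commute mult_right_mono mult_pos_pos)
    then have "(1 - \<epsilon>) * h n * G (real m) < G (real n * real m)"
      using \<open>\<theta> > 0\<close> by simp
    moreover have "real m \<le> (1 + \<epsilon>) * x"
      using \<open>real m \<le> (1 + \<theta>) * x\<close> \<open>\<theta> \<le> \<epsilon>\<close> x by (smt (verit) mult_right_mono)
    ultimately show "\<exists>m::nat. x \<le> real m \<and> real m \<le> (1 + \<epsilon>) * x \<and>
           (1 - \<epsilon>) * h n * G (real m) \<le> G (real n * real m)"
      using \<open>x \<le> real m\<close> by auto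
  qed
qed

text \<open>
  A one-sided form of log-uniform continuity; it is the only regularity of the normal order
  that the argument needs.
\<close>

definition log_lower_unif_cont :: "(real \<Rightarrow> real) \<Rightarrow> bool" where
  "log_lower_unif_cont g \<longleftrightarrow>
     (\<forall>\<eta>>0. \<exists>\<delta>>0. \<forall>x y. 0 < x \<longrightarrow> x \<le> y \<longrightarrow> y \<le> (1 + \<delta>) * x \<longrightarrow> (1 - \<eta>) * g x \<le> g y)"

lemma mono_on_imp_log_lower_unif_cont:
  assumes "mono_on {0<..} g" and gpos: "\<forall>x::real. x > 0 \<longrightarrow> g x > 0"
  shows "log_lower_unif_cont g"
  unfolding log_lower_unif_cont_def
proof (intro allI impI exI [of _ 1] conjI)
  fix \<eta> x y :: real assume "\<eta> > 0" "0 < x" "x \<le> y"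
  then have "(1 - \<eta>) * g x \<le> g x" using gpos by (simp add: mult_le_cancel_right1)
  also have "g x \<le> g y" using \<open>mono_on {0<..} g\<close> \<open>0 < x\<close> \<open>x \<le> y\<close> by (auto elim: mono_onD)
  finally show "(1 - \<eta>) * g x \<le> g y" .
qed simp

lemma log_unif_cont_imp_log_lower_unif_cont:
  assumes "log_unif_cont g" and gpos: "\<forall>x::real. x > 0 \<longrightarrow> g x > 0"
  shows "log_lower_unif_cont g"
  unfolding log_lower_unif_cont_def
proof (intro allI impI)
  fix \<eta> :: real assume "\<eta> > 0"
  then obtain \<delta> where "\<delta> > 0" and \<delta>:
      "\<And>x y. x > 0 \<Longrightarrow> y > 0 \<Longrightarrow> \<bar>x / y - 1\<bar> < \<delta> \<Longrightarrow> \<bar>g x / g y - 1\<bar> < \<eta>"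
    using \<open>log_unif_cont g\<close> unfolding log_unif_cont_def by blast
  have "(1 - \<eta>) * g x \<le> g y" if "0 < x" "x \<le> y" "y \<le> (1 + \<delta> / 2) * x" for x y
  proof -
    have "1 \<le> y / x" "y / x \<le> 1 + \<delta> / 2"
      using that by (simp_all add: pos_le_divide_eq pos_divide_le_eq)
    then have "\<bar>y / x - 1\<bar> < \<delta>" using \<open>\<delta> > 0\<close> by linarith
    then have "\<bar>g y / g x - 1\<bar> < \<eta>" using that by (intro \<delta>) auto
    moreover have "g x > 0" using gpos \<open>0 < x\<close> by blast
    ultimately show ?thesis by (simp add: abs_less_iff field_simps)
  qed
  then show "\<exists>\<delta>>0. \<forall>x y. 0 < x \<longrightarrow> x \<le> y \<longrightarrow> y \<le> (1 + \<delta>) * x \<longrightarrow> (1 - \<eta>) * g x \<le> g y"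
    using \<open>\<delta> > 0\<close> by (intro exI [of _ "\<delta> / 2"]) auto
qed

lemma log_lower_unif_cont_bounded_drop:
  assumes "log_lower_unif_cont g" and gpos: "\<forall>x::real. x > 0 \<longrightarrow> g x > 0"
  shows "\<exists>M>0. \<forall>l y. 1 \<le> l \<longrightarrow> l \<le> L \<longrightarrow> y > 0 \<longrightarrow> g y \<le> M * g (l * y)"
proof -
  have "(1::real) / 2 > 0" by simp
  then obtain \<delta> where "\<delta> > 0" and \<delta>:
      "\<And>x y. 0 < x \<Longrightarrow> x \<le> y \<Longrightarrow> y \<le> (1 + \<delta>) * x \<Longrightarrow> (1 - 1 / 2) * g x \<le> g y"
    using \<open>log_lower_unif_cont g\<close> unfolding log_lower_unif_cont_def by blast
  define q where "q = 1 + \<delta>"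
  have "q > 1" using \<open>\<delta> > 0\<close> by (simp add: q_def)
  have drop: "g y \<le> 2 ^ i * g (l * y)" if "1 \<le> l" "l \<le> q ^ i" "y > 0" for i l y
    using that
  proof (induction i arbitrary: l)
    case 0
    then show ?case by simp
  next
    case (Suc i)
    define l' where "l' = max 1 (l / q)"
    have "1 \<le> l'" "l' \<le> q ^ i" using Suc.prems \<open>q > 1\<close> by (auto simp: l'_def divide_le_eq mult.commute)
    then have "g y \<le> 2 ^ i * g (l' * y)" using Suc by blast
    also have "g (l' * y) \<le> 2 * g (l * y)"
    proof -
      have "(1 - 1 / 2) * g (l' * y) \<le> g (l * y)"
      proof (rule \<delta>)
        show "0 < l' * y" using \<open>1 \<le> l'\<close> \<open>y > 0\<close> by simp
        show "l' * y \<le> l * y" using Suc.prems \<open>q > 1\<close> by (auto simp: l'_def divide_le_eq mult.commute)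
        have "l = q * (l / q)" using \<open>q > 1\<close> by simp
        also have "\<dots> \<le> q * l'" using \<open>q > 1\<close> unfolding l'_def by (intro mult_left_mono) auto
        finally show "l * y \<le> (1 + \<delta>) * (l' * y)"
          using \<open>y > 0\<close> by (simp add: q_def mult.assoc [symmetric])
      qed
      then show ?thesis by simp
    qed
    finally show ?case by (simp add: mult.assoc)
  qed
  obtain i :: nat where "L < q ^ i" using real_arch_pow [OF \<open>q > 1\<close>] by blast
  then show ?thesis using drop by (intro exI [of _ "2 ^ i"]) force
qed

lemma iterated_growth:
  fixes g :: "real \<Rightarrow> real"
  assumes growth: "\<forall>y\<ge>Y. a * g y \<le> g (s * y)" and "s \<ge> 1" "a \<ge> 0" "Y \<ge> 0"
  shows "a ^ K * g Y \<le> g (s ^ K * Y)"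
proof (induction K)
  case 0
  then show ?case by simp
next
  case (Suc K)
  have "a ^ Suc K * g Y \<le> a * g (s ^ K * Y)"
    using Suc \<open>a \<ge> 0\<close> by (simp add: mult.assoc mult_left_mono)
  also have "\<dots> \<le> g (s * (s ^ K * Y))"
    using growth \<open>s \<ge> 1\<close> \<open>Y \<ge> 0\<close> by (simp add: mult_le_cancel_right1)
  finally show ?case by (simp add: mult.assoc)
qed

lemma ratio_le_of_integer_approx:
  fixes A B Ls Lr c C :: real
  assumes "Ls > 0" "Lr > 0"
    and approx: "\<And>J::nat. \<exists>K::nat. \<bar>real K * Ls - real J * Lr\<bar> \<le> c \<and> real K * A \<le> real J * B + C"
  shows "A / Ls \<le> B / Lr"
proof -
  have bound: "real J * (Lr * A / Ls - B) \<le> C + c * \<bar>A\<bar> / Ls" for J :: nat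
  proof -
    obtain K :: nat where K: "\<bar>real K * Ls - real J * Lr\<bar> \<le> c" "real K * A \<le> real J * B + C"
      using approx by blast
    define t where "t = real K * Ls - real J * Lr"
    have "real K * A = real J * (Lr * A / Ls) + t * A / Ls"
      using \<open>Ls > 0\<close> by (simp add: t_def field_simps)
    moreover have "\<bar>t * A\<bar> \<le> c * \<bar>A\<bar>"
      using K(1) unfolding t_def abs_mult by (intro mult_right_mono) auto
    then have "- (c * \<bar>A\<bar> / Ls) \<le> t * A / Ls"
      using \<open>Ls > 0\<close> by (simp add: field_simps abs_le_iff)
    ultimately show ?thesis using K(2) by (simp add: algebra_simps)
  qed
  have "Lr * A / Ls - B \<le> 0"
  proof (rule ccontr)
    assume "\<not> Lr * A / Ls - B \<le> 0"
    moreover obtain J :: nat where "(C + c * \<bar>A\<bar> / Ls) / (Lr * A / Ls - B) < real J"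
      using reals_Archimedean2 by blast
    ultimately show False using bound [of J] by (simp add: divide_less_eq)
  qed
  then show ?thesis using \<open>Ls > 0\<close> \<open>Lr > 0\<close> by (simp add: field_simps)
qed

lemma growth_exponent_le:
  fixes g :: "real \<Rightarrow> real"
  assumes gpos: "\<forall>x::real. x > 0 \<longrightarrow> g x > 0"
    and "Y > 0" "s > 1" "r > 1" "a > 0" "b > 0" "M > 0"
    and drop: "\<forall>l y. 1 \<le> l \<longrightarrow> l \<le> s \<longrightarrow> y > 0 \<longrightarrow> g y \<le> M * g (l * y)"
    and up: "\<forall>y\<ge>Y. a * g y \<le> g (s * y)" and down: "\<forall>y\<ge>Y. g (r * y) \<le> b * g y"
  shows "ln a / ln s \<le> ln b / ln r"
proof (rule ratio_le_of_integer_approx)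
  show "ln s > 0" "ln r > 0" using \<open>s > 1\<close> \<open>r > 1\<close> by auto
  fix J :: nat
  \<comment> \<open>\<open>K\<close> is chosen with \<open>s ^ K \<le> r ^ J < s ^ (K + 1)\<close>, so that \<open>drop\<close> applies.\<close>
  define K where "K = nat \<lfloor>real J * ln r / ln s\<rfloor>"
  have "real K \<le> real J * ln r / ln s" "real J * ln r / ln s < real K + 1"
    using \<open>ln s > 0\<close> \<open>ln r > 0\<close> by (simp_all add: K_def)
  then have K: "real K * ln s \<le> real J * ln r" "real J * ln r < (real K + 1) * ln s"
    using \<open>ln s > 0\<close> by (simp_all add: field_simps)
  have "s ^ K \<le> r ^ J" "r ^ J \<le> s * s ^ K"
    using K \<open>s > 1\<close> \<open>r > 1\<close> by (simp_all add: ln_le_cancel_iff [symmetric] ln_realpow ln_mult algebra_simps)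
  have "a ^ K * g Y \<le> g (s ^ K * Y)"
    using up \<open>s > 1\<close> \<open>a > 0\<close> \<open>Y > 0\<close> by (intro iterated_growth) auto
  also have "\<dots> \<le> M * g (r ^ J / s ^ K * (s ^ K * Y))"
  proof (intro drop [rule_format])
    show "1 \<le> r ^ J / s ^ K" "r ^ J / s ^ K \<le> s"
      using \<open>s ^ K \<le> r ^ J\<close> \<open>r ^ J \<le> s * s ^ K\<close> \<open>s > 1\<close> by (simp_all add: divide_le_eq mult.commute)
    show "s ^ K * Y > 0" using \<open>s > 1\<close> \<open>Y > 0\<close> by simp
  qed
  also have "\<dots> = M * g (r ^ J * Y)" using \<open>s > 1\<close> by simp
  also have "\<dots> \<le> M * (b ^ J * g Y)"
  proof -
    have "b ^ J * - g Y \<le> - g (r ^ J * Y)"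
      using down \<open>r > 1\<close> \<open>b > 0\<close> \<open>Y > 0\<close> by (intro iterated_growth [where g = "\<lambda>y. - g y"]) auto
    then show ?thesis using \<open>M > 0\<close> by simp
  qed
  finally have "a ^ K \<le> M * b ^ J" using gpos \<open>Y > 0\<close> by (simp add: mult.assoc)
  then have "real K * ln a \<le> real J * ln b + ln M"
    using \<open>a > 0\<close> \<open>b > 0\<close> \<open>M > 0\<close> by (simp add: ln_le_cancel_iff [symmetric] ln_mult ln_realpow)
  moreover have "\<bar>real K * ln s - real J * ln r\<bar> \<le> ln s" using K by (simp add: algebra_simps)
  ultimately show "\<exists>K::nat. \<bar>real K * ln s - real J * ln r\<bar> \<le> ln s \<and> real K * ln a \<le> real J * ln b + ln M"
    by blast
qed

lemma min_divide_le_divide: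
  fixes x :: real
  assumes "0 < u" "u \<le> v" "v \<le> w"
  shows "min (x / w) (x / u) \<le> x / v"
proof (cases "x \<ge> 0")
  case True
  then have "x / w \<le> x / v" using assms by (intro divide_left_mono) auto
  then show ?thesis by simp
next
  case False
  then have "x / u \<le> x / v" using assms by (intro divide_left_mono_neg) auto
  then show ?thesis by simp
qed

lemma divide_le_max_divide:
  fixes x :: real
  assumes "0 < u" "u \<le> v" "v \<le> w"
  shows "x / v \<le> max (x / u) (x / w)"
proof (cases "x \<ge> 0")
  case True
  then have "x / v \<le> x / u" using assms by (intro divide_left_mono) auto
  then show ?thesis by simp
next
  case False
  then have "x / v \<le> x / w" using assms by (intro divide_left_mono_neg) auto
  then show ?thesis by simp
qed

lemma mono_on_inverse_of_antimono_on:
  fixes g :: "real \<Rightarrow> real"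
  assumes "antimono_on A g" and "\<forall>x\<in>A. g x > 0"
  shows "mono_on A (\<lambda>x. 1 / g x)"
proof (rule mono_onI)
  fix x y assume "x \<in> A" "y \<in> A" "x \<le> y"
  then have "g y \<le> g x" using \<open>antimono_on A g\<close> by (auto dest: monotone_onD)
  then show "1 / g x \<le> 1 / g y" using assms(2) \<open>x \<in> A\<close> \<open>y \<in> A\<close> by (simp add: frac_le)
qed

locale supermult_normal_order =
  fixes f :: "nat \<Rightarrow> real" and g :: "real \<Rightarrow> real"
  assumes fpos: "\<forall>n::nat. n \<ge> 1 \<longrightarrow> f n > 0"
    and wsm: "weakly_supermult f"
    and wsm_inv: "weakly_supermult (\<lambda>n. 1 / f n)"
    and gpos: "\<forall>x::real. x > 0 \<longrightarrow> g x > 0"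
    and normal: "has_normal_order f g"
begin

lemma f_one: "f 1 = 1"
proof -
  have "f 1 \<le> 1" using wsm fpos by (rule weakly_supermult_at_one)
  moreover have "1 / f 1 \<le> 1" using wsm_inv fpos by (intro weakly_supermult_at_one) auto
  ultimately show ?thesis using fpos by (auto simp: divide_le_eq)
qed

lemma inverse: "supermult_normal_order (\<lambda>n. 1 / f n) (\<lambda>x. 1 / g x)"
  using fpos wsm wsm_inv gpos has_normal_order_inverse [OF normal fpos gpos]
  by unfold_locales simp_all

lemma eventually_lower_growth:
  assumes "n \<ge> 1" "0 < \<epsilon>" "\<epsilon> < 1" "\<eta> < 1"
    and reg: "\<And>x y. 0 < x \<Longrightarrow> x \<le> y \<Longrightarrow> y \<le> (1 + \<epsilon>) * x \<Longrightarrow> (1 - \<eta>) * g x \<le> g y"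
  shows "\<exists>Y>0. \<forall>y\<ge>Y. (1 - \<eta>) ^ 2 * (1 - \<epsilon>) * f n * g y \<le> g (real n * (1 + \<epsilon>) * y)"
proof -
  obtain X where X: "\<And>x. x \<ge> X \<Longrightarrow> \<exists>m::nat. x \<le> real m \<and> real m \<le> (1 + \<epsilon>) * x \<and>
           (1 - \<epsilon>) * f n * g (real m) \<le> g (real n * real m)"
    using normal_order_supermult [OF fpos gpos normal wsm assms(1-3)] by blast
  have "(1 - \<eta>) ^ 2 * (1 - \<epsilon>) * f n * g y \<le> g (real n * (1 + \<epsilon>) * y)" if y: "y \<ge> max X 1" for y
  proof -
    obtain m :: nat where m: "y \<le> real m" "real m \<le> (1 + \<epsilon>) * y"
      and super: "(1 - \<epsilon>) * f n * g (real m) \<le> g (real n * real m)"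
      using X y by fastforce
    have "f n > 0" using fpos \<open>n \<ge> 1\<close> by blast
    then have coeff: "0 \<le> (1 - \<eta>) * (1 - \<epsilon>) * f n"
      using \<open>\<epsilon> < 1\<close> \<open>\<eta> < 1\<close> by (intro mult_nonneg_nonneg) auto
    have "(1 - \<eta>) ^ 2 * (1 - \<epsilon>) * f n * g y = (1 - \<eta>) * (1 - \<epsilon>) * f n * ((1 - \<eta>) * g y)"
      by (simp add: power2_eq_square)
    also have "\<dots> \<le> (1 - \<eta>) * (1 - \<epsilon>) * f n * g (real m)"
      using m y by (intro mult_left_mono [OF reg coeff]) auto
    also have "\<dots> \<le> (1 - \<eta>) * g (real n * real m)"
      using super \<open>\<eta> < 1\<close> by (simp add: mult.assoc mult_left_mono)
    also have "\<dots> \<le> g (real n * (1 + \<epsilon>) * y)"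
      using m y \<open>n \<ge> 1\<close> \<open>0 < \<epsilon>\<close> by (intro reg) (auto simp: mult.assoc mult_left_mono)
    finally show ?thesis .
  qed
  then show ?thesis by (intro exI [of _ "max X 1"]) auto
qed

lemma eventually_upper_growth:
  assumes "n \<ge> 1" "0 < \<epsilon>" "\<epsilon> < 1" "\<eta> < 1"
    and reg: "\<And>x y. 0 < x \<Longrightarrow> x \<le> y \<Longrightarrow> y \<le> (1 + \<epsilon>) * x \<Longrightarrow> (1 - \<eta>) * g x \<le> g y"
  shows "\<exists>Y>0. \<forall>y\<ge>Y. (1 - \<eta>) ^ 2 * (1 - \<epsilon>) * g (real n / (1 + \<epsilon>) * y) \<le> f n * g y"
proof -
  interpret inverse: supermult_normal_order "\<lambda>n. 1 / f n" "\<lambda>x. 1 / g x" by (rule inverse)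
  obtain X where X: "\<And>x. x \<ge> X \<Longrightarrow> \<exists>m::nat. x \<le> real m \<and> real m \<le> (1 + \<epsilon>) * x \<and>
           (1 - \<epsilon>) * (1 / f n) * (1 / g (real m)) \<le> 1 / g (real n * real m)"
    using normal_order_supermult [OF inverse.fpos inverse.gpos inverse.normal inverse.wsm assms(1-3)]
    by blast
  have "(1 - \<eta>) ^ 2 * (1 - \<epsilon>) * g (real n / (1 + \<epsilon>) * y) \<le> f n * g y"
    if "y \<ge> (1 + \<epsilon>) * max X 1" for y
  proof -
    define x where "x = y / (1 + \<epsilon>)"
    have "x \<ge> max X 1"
      using divide_right_mono [OF that, of "1 + \<epsilon>"] \<open>0 < \<epsilon>\<close> by (simp add: x_def)
    then obtain m :: nat where m: "x \<le> real m" "real m \<le> (1 + \<epsilon>) * x"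
      and super: "(1 - \<epsilon>) * (1 / f n) * (1 / g (real m)) \<le> 1 / g (real n * real m)"
      using X by fastforce
    have "f n > 0" "g (real m) > 0" "g (real n * real m) > 0"
      using fpos gpos \<open>n \<ge> 1\<close> m \<open>x \<ge> max X 1\<close> by auto
    then have super': "(1 - \<epsilon>) * g (real n * real m) \<le> f n * g (real m)"
      using super by (simp add: field_simps)
    have y: "y = (1 + \<epsilon>) * x" using \<open>0 < \<epsilon>\<close> by (simp add: x_def)
    have "(1 - \<eta>) ^ 2 * (1 - \<epsilon>) * g (real n / (1 + \<epsilon>) * y)
        = (1 - \<eta>) * (1 - \<epsilon>) * ((1 - \<eta>) * g (real n * x))"
      using \<open>0 < \<epsilon>\<close> by (simp add: y power2_eq_square)
    also have "\<dots> \<le> (1 - \<eta>) * ((1 - \<epsilon>) * g (real n * real m))"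
      using m \<open>x \<ge> max X 1\<close> \<open>n \<ge> 1\<close> \<open>\<epsilon> < 1\<close> \<open>\<eta> < 1\<close>
      by (simp only: mult.assoc, intro mult_left_mono reg) (auto simp: mult.left_commute)
    also have "\<dots> \<le> (1 - \<eta>) * (f n * g (real m))"
      using super' \<open>\<eta> < 1\<close> by (intro mult_left_mono) auto
    also have "\<dots> \<le> f n * g y"
      using m y \<open>x \<ge> max X 1\<close> \<open>f n > 0\<close> \<open>0 < \<epsilon>\<close>
      by (simp only: mult.left_commute [of "1 - \<eta>"], intro mult_left_mono reg) auto
    finally show ?thesis .
  qed
  then show ?thesis using \<open>0 < \<epsilon>\<close> by (intro exI [of _ "(1 + \<epsilon>) * max X 1"]) auto
qed

lemma exponent_le_with_error:
  assumes reg: "log_lower_unif_cont g" and "n \<ge> 2" "k \<ge> 2" "0 < \<eta>" "\<eta> < 1 / 2"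
  shows "\<exists>\<epsilon>. 0 < \<epsilon> \<and> \<epsilon> \<le> \<eta> \<and>
    ln ((1 - \<eta>) ^ 2 * (1 - \<epsilon>) * f n) / ln (real n * (1 + \<epsilon>))
      \<le> ln (f k / ((1 - \<eta>) ^ 2 * (1 - \<epsilon>))) / ln (real k / (1 + \<epsilon>))"
proof -
  obtain \<delta> where "\<delta> > 0"
    and \<delta>: "\<And>x y. 0 < x \<Longrightarrow> x \<le> y \<Longrightarrow> y \<le> (1 + \<delta>) * x \<Longrightarrow> (1 - \<eta>) * g x \<le> g y"
    using reg \<open>0 < \<eta>\<close> unfolding log_lower_unif_cont_def by blast
  define \<epsilon> where "\<epsilon> = min \<eta> \<delta>"
  have "0 < \<epsilon>" "\<epsilon> \<le> \<eta>" "\<epsilon> < 1 / 2" using \<open>\<delta> > 0\<close> assms by (auto simp: \<epsilon>_def)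
  have reg_\<epsilon>: "(1 - \<eta>) * g x \<le> g y" if "0 < x" "x \<le> y" "y \<le> (1 + \<epsilon>) * x" for x y
    using that by (intro \<delta>) (auto simp: \<epsilon>_def intro: order.trans [OF _ mult_right_mono])
  define c where "c = (1 - \<eta>) ^ 2 * (1 - \<epsilon>)"
  have "c > 0" using \<open>\<eta> < 1 / 2\<close> \<open>\<epsilon> < 1 / 2\<close> by (simp add: c_def)
  have "\<exists>Y>0. \<forall>y\<ge>Y. c * f n * g y \<le> g (real n * (1 + \<epsilon>) * y)"
    unfolding c_def by (rule eventually_lower_growth) (use assms \<open>0 < \<epsilon>\<close> \<open>\<epsilon> < 1 / 2\<close> reg_\<epsilon> in auto)
  then obtain Y1 where "Y1 > 0" and up: "\<forall>y\<ge>Y1. c * f n * g y \<le> g (real n * (1 + \<epsilon>) * y)"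
    by blast
  have "\<exists>Y>0. \<forall>y\<ge>Y. c * g (real k / (1 + \<epsilon>) * y) \<le> f k * g y"
    unfolding c_def by (rule eventually_upper_growth) (use assms \<open>0 < \<epsilon>\<close> \<open>\<epsilon> < 1 / 2\<close> reg_\<epsilon> in auto)
  then obtain Y2 where "Y2 > 0" and down: "\<forall>y\<ge>Y2. c * g (real k / (1 + \<epsilon>) * y) \<le> f k * g y"
    by blast
  obtain M where "M > 0"
    and drop: "\<forall>l y. 1 \<le> l \<longrightarrow> l \<le> real n * (1 + \<epsilon>) \<longrightarrow> y > 0 \<longrightarrow> g y \<le> M * g (l * y)"
    using log_lower_unif_cont_bounded_drop [OF reg gpos] by blast
  have "ln (c * f n) / ln (real n * (1 + \<epsilon>)) \<le> ln (f k / c) / ln (real k / (1 + \<epsilon>))"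
  proof (rule growth_exponent_le [OF gpos _ _ _ _ _ \<open>M > 0\<close> drop])
    show "max Y1 Y2 > 0" using \<open>Y1 > 0\<close> by simp
    show "real n * (1 + \<epsilon>) > 1" using \<open>n \<ge> 2\<close> \<open>0 < \<epsilon>\<close> by (simp add: less_1_mult)
    show "real k / (1 + \<epsilon>) > 1" using \<open>k \<ge> 2\<close> \<open>\<epsilon> < 1 / 2\<close> \<open>0 < \<epsilon>\<close> by (simp add: less_divide_eq)
    show "c * f n > 0" "f k / c > 0" using fpos \<open>c > 0\<close> assms by auto
    show "\<forall>y\<ge>max Y1 Y2. c * f n * g y \<le> g (real n * (1 + \<epsilon>) * y)" using up by simp
    show "\<forall>y\<ge>max Y1 Y2. g (real k / (1 + \<epsilon>) * y) \<le> f k / c * g y"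
      using down \<open>c > 0\<close> by (simp add: pos_le_divide_eq mult.commute)
  qed
  then show ?thesis using \<open>0 < \<epsilon>\<close> \<open>\<epsilon> \<le> \<eta>\<close> unfolding c_def by blast
qed

lemma exponent_le:
  assumes reg: "log_lower_unif_cont g" and "n \<ge> 2" "k \<ge> 2"
  shows "ln (f n) / ln (real n) \<le> ln (f k) / ln (real k)"
proof -
  define A where "A \<eta> = (1 - \<eta>) ^ 3 * f n" for \<eta> :: real
  define B where "B \<eta> = f k / (1 - \<eta>) ^ 3" for \<eta> :: real
  have fpos': "f n > 0" "f k > 0" using fpos assms by auto
  have bound: "min (ln (A \<eta>) / ln (real n * (1 + \<eta>))) (ln (A \<eta>) / ln (real n))
      \<le> max (ln (B \<eta>) / ln (real k / (1 + \<eta>))) (ln (B \<eta>) / ln (real k))"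
    if \<eta>: "0 < \<eta>" "\<eta> < 1 / 2" for \<eta>
  proof -
    obtain \<epsilon> where "0 < \<epsilon>" "\<epsilon> \<le> \<eta>" and le:
      "ln ((1 - \<eta>) ^ 2 * (1 - \<epsilon>) * f n) / ln (real n * (1 + \<epsilon>))
        \<le> ln (f k / ((1 - \<eta>) ^ 2 * (1 - \<epsilon>))) / ln (real k / (1 + \<epsilon>))"
      using exponent_le_with_error [OF reg assms(2,3) \<eta>] by blast
    have c: "0 < (1 - \<eta>) ^ 3" "(1 - \<eta>) ^ 3 \<le> (1 - \<eta>) ^ 2 * (1 - \<epsilon>)"
      using \<eta> \<open>\<epsilon> \<le> \<eta>\<close> by (simp_all add: power3_eq_cube power2_eq_square mult_left_mono)
    have "min (ln (A \<eta>) / ln (real n * (1 + \<eta>))) (ln (A \<eta>) / ln (real n))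
        \<le> ln (A \<eta>) / ln (real n * (1 + \<epsilon>))"
      using \<open>n \<ge> 2\<close> \<open>0 < \<epsilon>\<close> \<open>\<epsilon> \<le> \<eta>\<close> by (intro min_divide_le_divide) auto
    also have "\<dots> \<le> ln ((1 - \<eta>) ^ 2 * (1 - \<epsilon>) * f n) / ln (real n * (1 + \<epsilon>))"
    proof (rule divide_right_mono)
      have "A \<eta> \<le> (1 - \<eta>) ^ 2 * (1 - \<epsilon>) * f n"
        using c fpos' by (simp add: A_def mult_right_mono)
      moreover have "0 < A \<eta>" using c fpos' by (simp add: A_def)
      ultimately show "ln (A \<eta>) \<le> ln ((1 - \<eta>) ^ 2 * (1 - \<epsilon>) * f n)"
        by (subst ln_le_cancel_iff) auto
      show "0 \<le> ln (real n * (1 + \<epsilon>))"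
        using \<open>n \<ge> 2\<close> \<open>0 < \<epsilon>\<close> less_1_mult [of "real n" "1 + \<epsilon>"] by simp
    qed
    also note le
    also have "ln (f k / ((1 - \<eta>) ^ 2 * (1 - \<epsilon>))) / ln (real k / (1 + \<epsilon>))
        \<le> ln (B \<eta>) / ln (real k / (1 + \<epsilon>))"
      using \<open>k \<ge> 2\<close> \<open>0 < \<epsilon>\<close> \<open>\<epsilon> \<le> \<eta>\<close> \<eta> c fpos'
      by (intro divide_right_mono) (auto simp: B_def divide_left_mono less_divide_eq)
    also have "\<dots> \<le> max (ln (B \<eta>) / ln (real k / (1 + \<eta>))) (ln (B \<eta>) / ln (real k))"
      using \<open>k \<ge> 2\<close> \<open>0 < \<epsilon>\<close> \<open>\<epsilon> \<le> \<eta>\<close> \<eta> divide_left_mono [of 1 "1 + \<epsilon>" "real k"]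
      by (intro divide_le_max_divide) (auto simp: less_divide_eq divide_left_mono)
    finally show ?thesis .
  qed
  have lower: "((\<lambda>\<eta>. min (ln (A \<eta>) / ln (real n * (1 + \<eta>))) (ln (A \<eta>) / ln (real n)))
      \<longlongrightarrow> min (ln (A 0) / ln (real n * (1 + 0))) (ln (A 0) / ln (real n))) (at_right 0)"
    using \<open>n \<ge> 2\<close> fpos' unfolding A_def by (intro tendsto_intros) auto
  have upper: "((\<lambda>\<eta>. max (ln (B \<eta>) / ln (real k / (1 + \<eta>))) (ln (B \<eta>) / ln (real k)))
      \<longlongrightarrow> max (ln (B 0) / ln (real k / (1 + 0))) (ln (B 0) / ln (real k))) (at_right 0)"
    using \<open>k \<ge> 2\<close> fpos' unfolding B_def by (intro tendsto_intros) auto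
  have "eventually (\<lambda>\<eta>. min (ln (A \<eta>) / ln (real n * (1 + \<eta>))) (ln (A \<eta>) / ln (real n))
      \<le> max (ln (B \<eta>) / ln (real k / (1 + \<eta>))) (ln (B \<eta>) / ln (real k))) (at_right 0)"
    unfolding eventually_at_right_field using bound by (intro exI [of _ "1 / 2"]) auto
  then have "min (ln (A 0) / ln (real n * (1 + 0))) (ln (A 0) / ln (real n))
      \<le> max (ln (B 0) / ln (real k / (1 + 0))) (ln (B 0) / ln (real k))"
    by (rule tendsto_le [OF trivial_limit_at_right_real upper lower])
  then show ?thesis by (simp add: A_def B_def)
qed

lemma power_law:
  assumes "log_lower_unif_cont g"
  shows "\<exists>c. \<forall>n::nat. n \<ge> 1 \<longrightarrow> f n = real n powr c"
proof (intro exI allI impI)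
  fix n :: nat assume "n \<ge> 1"
  show "f n = real n powr (ln (f 2) / ln 2)"
  proof (cases "n = 1")
    case True
    then show ?thesis using f_one by simp
  next
    case False
    then have "n \<ge> 2" using \<open>n \<ge> 1\<close> by simp
    then have "ln (f n) / ln (real n) = ln (f 2) / ln 2"
      using exponent_le [OF assms, of n 2] exponent_le [OF assms, of 2 n] by simp
    then have "ln (f n) = ln (f 2) / ln 2 * ln (real n)" using \<open>n \<ge> 2\<close> by (simp add: divide_eq_eq)
    have "f n = exp (ln (f n))" using fpos \<open>n \<ge> 2\<close> by simp
    also have "\<dots> = real n powr (ln (f 2) / ln 2)"
      using \<open>ln (f n) = ln (f 2) / ln 2 * ln (real n)\<close> \<open>n \<ge> 2\<close> by (simp add: powr_def)
    finally show ?thesis .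
  qed
qed

end

theorem corollary2:
  fixes f :: "nat \<Rightarrow> real" and g :: "real \<Rightarrow> real"
  assumes fpos: "\<forall>n::nat. n \<ge> 1 \<longrightarrow> f n > 0"
    and wsm: "weakly_supermult f"
    and wsm_inv: "weakly_supermult (\<lambda>n. 1 / f n)"
    and gpos: "\<forall>x::real. x > 0 \<longrightarrow> g x > 0"
    and normal: "has_normal_order f g"
    and greg: "mono_on {0<..} g \<or> antimono_on {0<..} g \<or> log_unif_cont g"
  shows "\<exists>c::real. \<forall>n::nat. n \<ge> 1 \<longrightarrow> f n = real n powr c"
proof -
  interpret supermult_normal_order f g by unfold_locales (fact assms)+
  interpret inverse: supermult_normal_order "\<lambda>n. 1 / f n" "\<lambda>x. 1 / g x" by (rule inverse)
  consider "log_lower_unif_cont g" | "mono_on {0<..} (\<lambda>x. 1 / g x)"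
    using greg gpos mono_on_imp_log_lower_unif_cont log_unif_cont_imp_log_lower_unif_cont
      mono_on_inverse_of_antimono_on by fastforce
  then show ?thesis
  proof cases
    case 1
    then show ?thesis by (rule power_law)
  next
    case 2
    then obtain c where c: "\<forall>n::nat. n \<ge> 1 \<longrightarrow> 1 / f n = real n powr c"
      using inverse.power_law mono_on_imp_log_lower_unif_cont inverse.gpos by blast
    have "f n = real n powr - c" if "n \<ge> 1" for n
    proof -
      have "f n = 1 / (1 / f n)" by simp
      also have "\<dots> = real n powr - c" using c that by (simp add: powr_minus_divide)
      finally show ?thesis .
    qed
    then show ?thesis by blast
  qed
qed

end
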